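(* Let $T:[\ell,r)\to[\ell,r)$ be a $k$-IET over the ordered alphabet $\mathcal{A}$ with partition $(I_a)_{a\in\mathcal{A}}$ and permutation $\pi\in S_{\mathcal{A}}$. Let $\mathcal{B}\subset\mathcal{A}$ be a proper nonempty $T$-invariant sub-alphabet whose intervals $I_b$, $b\in\mathcal{B}$, are contiguous, and let $\overline{\mathcal{B}}=\mathcal{A}\setminus\mathcal{B}$. Then $S_{\mathcal{B}}$ is the IET over $\mathcal{B}$ (with the order inherited from $\mathcal{A}$) with permutation $\pi|_{\mathcal{B}}$, and $S_{\overline{\mathcal{B}}}$ is the IET over $\overline{\mathcal{B}}$ (with the inherited order) with permutation $\pi|_{\overline{\mathcal{B}}}$.
   Context: A $k$-IET on $[\ell,r)$ over $\mathcal{A}=\{a_1<\dots<a_k\}$ is given by a partition of $[\ell,r)$ into left-closed right-open intervals $(I_a)_{a\in\mathcal{A}}$ of positive length ordered left to right according to the order of $\mathcal{A}$, and a permutation $\pi$ of $\mathcal{A}$; $T(x)=x+\tau_a$ on $I_a$ with $\tau_a=\sum_{b:\,\pi^{-1}(b)<\pi^{-1}(a)}|I_b|-\sum_{b<a}|I_b|$, so the images $T(I_{\pi(a_1)}),\dots,T(I_{\pi(a_k)})$ appear from left to right. Write $I_{\mathcal{B}}=\bigcup_{b\in\mathcal{B}}I_b=[\gamma_{\mathcal{B}},\delta_{\mathcal{B}})$; $\mathcal{B}$ is $T$-invariant if $T(I_{\mathcal{B}})=I_{\mathcal{B}}$. Let $I_{\overline{\mathcal{B}}}=[\ell,r)\setminus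 I_{\mathcal{B}}$. Define $S_{\mathcal{B}}=T|_{I_{\mathcal{B}}}$. If $I_{\overline{\mathcal{B}}}$ is an interval, $S_{\overline{\mathcal{B}}}=T|_{I_{\overline{\mathcal{B}}}}$; otherwise $I_{\overline{\mathcal{B}}}=[\ell,\gamma_{\mathcal{B}})\cup[\delta_{\mathcal{B}},r)$, and with the gluing map $G(x)=x$ on $[\ell,\gamma_{\mathcal{B}})$, $G(x)=x-|I_{\mathcal{B}}|$ on $[\delta_{\mathcal{B}},r)$, one sets $S_{\overline{\mathcal{B}}}=G\circ T|_{I_{\overline{\mathcal{B}}}}\circ G^{-1}$ on $[\ell,r-|I_{\mathcal{B}}|)$, with partition given by the images $G(I_b)$, $b\in\overline{\mathcal{B}}$. *)

theory Defs
  imports Complex_Main "HOL-Combinatorics.Permutations"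
begin

text \<open>The images of I (p a_1), ..., I (p a_k) appear
  from left to right, i.e. "inv p" gives the image position (as a letter of A).\<close>

definition iet_left :: "real \<Rightarrow> 'a::linorder set \<Rightarrow> ('a \<Rightarrow> real) \<Rightarrow> 'a \<Rightarrow> real" where
  "iet_left l A len a = l + (\<Sum>b\<in>{b\<in>A. b < a}. len b)"

definition iet_interval :: "real \<Rightarrow> 'a::linorder set \<Rightarrow> ('a \<Rightarrow> real) \<Rightarrow> 'a \<Rightarrow> real set" where
  "iet_interval l A len a = {iet_left l A len a ..< iet_left l A len a + len a}"

definition iet_transl :: "'a::linorder set \<Rightarrow> ('a \<Rightarrow> real) \<Rightarrow> ('a \<Rightarrow> 'a) \<Rightarrow> 'a \<Rightarrow> real" where
  "iet_transl A len p a =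
     (\<Sum>b\<in>{b\<in>A. inv p b < inv p a}. len b) - (\<Sum>b\<in>{b\<in>A. b < a}. len b)"

definition iet_map :: "real \<Rightarrow> 'a::linorder set \<Rightarrow> ('a \<Rightarrow> real) \<Rightarrow> ('a \<Rightarrow> 'a) \<Rightarrow> real \<Rightarrow> real" where
  "iet_map l A len p x =
     (if \<exists>a\<in>A. x \<in> iet_interval l A len a
      then x + iet_transl A len p (THE a. a \<in> A \<and> x \<in> iet_interval l A len a)
      else x)"

definition iet_union :: "real \<Rightarrow> 'a::linorder set \<Rightarrow> ('a \<Rightarrow> real) \<Rightarrow> 'a set \<Rightarrow> real set" where
  "iet_union l A len B = (\<Union>b\<in>B. iet_interval l A len b)"

definition perm_restrict :: "('a::linorder \<Rightarrow> 'a) \<Rightarrow> 'a set \<Rightarrow> ('a \<Rightarrow> 'a)" where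
  "perm_restrict p B = (THE sigma. sigma permutes B \<and>
      (\<forall>b\<in>B. \<forall>b'\<in>B. inv sigma b < inv sigma b' \<longleftrightarrow> inv p b < inv p b'))"

definition sub_gamma :: "real \<Rightarrow> 'a::linorder set \<Rightarrow> ('a \<Rightarrow> real) \<Rightarrow> 'a set \<Rightarrow> real" where
  "sub_gamma l A len B = iet_left l A len (Min B)"

definition sub_delta :: "real \<Rightarrow> 'a::linorder set \<Rightarrow> ('a \<Rightarrow> real) \<Rightarrow> 'a set \<Rightarrow> real" where
  "sub_delta l A len B = sub_gamma l A len B + (\<Sum>b\<in>B. len b)"

text \<open>S_B = T restricted to I_B.\<close>
definition S_sub :: "real \<Rightarrow> 'a::linorder set \<Rightarrow> ('a \<Rightarrow> real) \<Rightarrow> ('a \<Rightarrow> 'a) \<Rightarrow> 'a set \<Rightarrow> real \<Rightarrow> real" where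
  "S_sub l A len p B = iet_map l A len p"

text \<open>Complement: if I_(A-B) is an interval (gamma_B = l, or delta_B = r) no gluing is
  done (G = id); otherwise G x = x on [l,gamma_B), G x = x - |I_B| on [delta_B,r).
  The left endpoint of the domain of S_(A-B) is compl_start.\<close>
definition compl_start :: "real \<Rightarrow> 'a::linorder set \<Rightarrow> ('a \<Rightarrow> real) \<Rightarrow> 'a set \<Rightarrow> real" where
  "compl_start l A len B = (if sub_gamma l A len B = l then sub_delta l A len B else l)"

definition glue :: "real \<Rightarrow> 'a::linorder set \<Rightarrow> ('a \<Rightarrow> real) \<Rightarrow> 'a set \<Rightarrow> real \<Rightarrow> real" where
  "glue l A len B x = (if sub_gamma l A len B = l \<or> x < sub_gamma l A len B then x
                       else x - (\<Sum>b\<in>B. len b))"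

definition glue_inv :: "real \<Rightarrow> 'a::linorder set \<Rightarrow> ('a \<Rightarrow> real) \<Rightarrow> 'a set \<Rightarrow> real \<Rightarrow> real" where
  "glue_inv l A len B y = (if sub_gamma l A len B = l \<or> y < sub_gamma l A len B then y
                       else y + (\<Sum>b\<in>B. len b))"

definition S_compl :: "real \<Rightarrow> 'a::linorder set \<Rightarrow> ('a \<Rightarrow> real) \<Rightarrow> ('a \<Rightarrow> 'a) \<Rightarrow> 'a set \<Rightarrow> real \<Rightarrow> real" where
  "S_compl l A len p B y = glue l A len B (iet_map l A len p (glue_inv l A len B y))"

end

theory Submission
  imports Defs
begin

text \<open>Stack the intervals of the letters side by side from l in an order f: the order of
  the alphabet gives the partition I_a, the order inv p gives the images T(I_a). Stacked
  intervals of a set of letters can only tile an interval if these letters are consecutive in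
  the stacking order, so invariance makes B a contiguous block in both orders, with the same
  total length below it. Relative to a contiguous block, a letter of B sits at the length below
  the block plus its offset within B, and a letter outside B at its offset within A - B, plus
  |I_B| if it lies above the block. So the translations on B are those of the restricted IET,
  and gluing removes exactly the extra |I_B|, in both orders.\<close>

section \<open>Intervals stacked in a given order\<close>

definition sum_before :: "'a set \<Rightarrow> ('a \<Rightarrow> real) \<Rightarrow> ('a \<Rightarrow> 'b::linorder) \<Rightarrow> 'a \<Rightarrow> real" where
  "sum_before C len f a = (\<Sum>c\<in>{c\<in>C. f c < f a}. len c)"

definition stacked_interval ::
    "real \<Rightarrow> 'a set \<Rightarrow> ('a \<Rightarrow> real) \<Rightarrow> ('a \<Rightarrow> 'b::linorder) \<Rightarrow> 'a \<Rightarrow> real set" where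
  "stacked_interval s C len f a = {s + sum_before C len f a ..< s + sum_before C len f a + len a}"

lemma iet_interval_eq_stacked_interval:
  "iet_interval l A len = stacked_interval l A len (\<lambda>x. x)"
  by (simp add: fun_eq_iff iet_interval_def stacked_interval_def iet_left_def sum_before_def)

lemma iet_left_eq_sum_before:
  "iet_left l A len a = l + sum_before A len (\<lambda>x. x) a"
  by (simp add: iet_left_def sum_before_def)

lemma iet_transl_eq_sum_before:
  "iet_transl A len p a = sum_before A len (inv p) a - sum_before A len (\<lambda>x. x) a"
  by (simp add: iet_transl_def sum_before_def)

lemma sum_before_nonneg:
  assumes "\<forall>c\<in>C. 0 \<le> len c"
  shows "0 \<le> sum_before C len f a"
  unfolding sum_before_def using assms by (intro sum_nonneg) auto

lemma sum_before_add_le: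
  assumes "finite C" "\<forall>c\<in>C. 0 \<le> len c" "a \<in> C" "f a < f a'"
  shows "sum_before C len f a + len a \<le> sum_before C len f a'"
proof -
  have "sum_before C len f a + len a = (\<Sum>c\<in>insert a {c\<in>C. f c < f a}. len c)"
    using assms by (simp add: sum_before_def)
  also have "\<dots> \<le> sum_before C len f a'"
    unfolding sum_before_def using assms by (intro sum_mono2) auto
  finally show ?thesis .
qed

lemma stacked_interval_disjoint:
  assumes "finite C" "\<forall>c\<in>C. 0 \<le> len c" "inj_on f C" "a \<in> C" "a' \<in> C" "a \<noteq> a'"
  shows "stacked_interval s C len f a \<inter> stacked_interval s C len f a' = {}"
proof -
  have "f a < f a' \<or> f a' < f a"
    using assms(3-6) by (metis inj_on_def linorder_neqE)
  then show ?thesis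
    using sum_before_add_le[OF assms(1,2,4), of f a'] sum_before_add_le[OF assms(1,2,5), of f a]
    by (auto simp: stacked_interval_def)
qed

lemma UN_stacked_interval:
  assumes "finite C" "\<forall>c\<in>C. 0 \<le> len c" "inj_on f C"
  shows "(\<Union>c\<in>C. stacked_interval s C len f c) = {s..<s + sum len C}"
  using assms
proof (induction C rule: finite_remove_induct)
  case (remove C)
  have "Max (f ` C) \<in> f ` C"
    using remove.hyps(1,2) by (intro Max_in) auto
  then obtain m where m: "m \<in> C" "f m = Max (f ` C)"
    by (auto simp: eq_commute)
  have below_m: "f c < f m" if "c \<in> C - {m}" for c
  proof -
    have "f c \<le> f m"
      using that m(2) remove.hyps(1) by simp
    moreover have "f c \<noteq> f m"
      using inj_on_contraD[OF remove.prems(2), of c m] that m(1) by blast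
    ultimately show ?thesis by simp
  qed
  have below_m_eq: "{c\<in>C. f c < f m} = C - {m}"
    using below_m by auto
  have "sum_before C len f c = sum_before (C - {m}) len f c" if "c \<in> C - {m}" for c
  proof -
    have "{x\<in>C. f x < f c} = {x\<in>C - {m}. f x < f c}"
      using below_m that by (auto dest: order.asym)
    then show ?thesis by (simp add: sum_before_def)
  qed
  then have "(\<Union>c\<in>C - {m}. stacked_interval s C len f c)
      = (\<Union>c\<in>C - {m}. stacked_interval s (C - {m}) len f c)"
    by (simp add: stacked_interval_def)
  also have "\<dots> = {s..<s + sum len (C - {m})}"
    using remove.IH[OF m(1)] remove.prems by (simp add: inj_on_diff)
  finally have "(\<Union>c\<in>C - {m}. stacked_interval s C len f c) = {s..<s + sum len (C - {m})}" .
  moreover have "stacked_interval s C len f m = {s + sum len (C - {m})..<s + sum len C}"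
    using below_m_eq m(1) remove.hyps(1) by (simp add: stacked_interval_def sum_before_def sum_diff1)
  moreover have "(\<Union>c\<in>C. stacked_interval s C len f c)
      = (\<Union>c\<in>C - {m}. stacked_interval s C len f c) \<union> stacked_interval s C len f m"
    using m(1) by blast
  moreover have "0 \<le> sum len (C - {m})" "sum len (C - {m}) \<le> sum len C"
    using remove.prems(1) remove.hyps(1) by (auto intro: sum_nonneg sum_mono2)
  ultimately show ?case
    by (simp add: ivl_disj_un_two(3))
qed simp

section \<open>Contiguous blocks\<close>

definition contiguous_block :: "('a \<Rightarrow> 'b::linorder) \<Rightarrow> 'a set \<Rightarrow> 'a set \<Rightarrow> bool" where
  "contiguous_block f A B \<longleftrightarrow> (\<forall>c\<in>A - B. (\<forall>b\<in>B. f c < f b) \<or> (\<forall>b\<in>B. f b < f c))"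

definition below_block :: "('a \<Rightarrow> 'b::linorder) \<Rightarrow> 'a set \<Rightarrow> 'a set \<Rightarrow> 'a set" where
  "below_block f A B = {c\<in>A - B. \<forall>b\<in>B. f c < f b}"

lemma sum_before_in_block:
  assumes "finite A" "B \<subseteq> A" "contiguous_block f A B" "b \<in> B"
  shows "sum_before A len f b = sum len (below_block f A B) + sum_before B len f b"
proof -
  have "{c\<in>A. f c < f b} = below_block f A B \<union> {c\<in>B. f c < f b}"
    using assms(2-4) by (auto simp: contiguous_block_def below_block_def dest: order.asym)
  moreover have "below_block f A B \<inter> {c\<in>B. f c < f b} = {}"
    by (auto simp: below_block_def)
  moreover have "finite (below_block f A B)" "finite {c\<in>B. f c < f b}"
    using assms(1,2) by (auto simp: below_block_def intro: finite_subset)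
  ultimately show ?thesis
    by (simp add: sum_before_def sum.union_disjoint)
qed

lemma sum_before_outside_block:
  assumes "finite A" "B \<subseteq> A" "contiguous_block f A B" "c \<in> A - B"
  shows "sum_before A len f c
    = sum_before (A - B) len f c + (if c \<in> below_block f A B then 0 else sum len B)"
proof (cases "c \<in> below_block f A B")
  case True
  then have "{x\<in>A. f x < f c} = {x\<in>A - B. f x < f c}"
    by (auto simp: below_block_def dest: order.asym)
  then show ?thesis
    using True by (simp add: sum_before_def)
next
  case False
  then have "\<forall>b\<in>B. f b < f c"
    using assms(3,4) by (auto simp: contiguous_block_def below_block_def)
  then have "{x\<in>A. f x < f c} = {x\<in>A - B. f x < f c} \<union> B"
    using assms(2) by auto
  moreover have "finite B"
    using assms(1,2) finite_subset by auto
  ultimately have "sum_before A len f c = sum_before (A - B) len f c + sum len B"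
    unfolding sum_before_def using assms(1) by (subst sum.union_disjoint[symmetric]) auto
  then show ?thesis
    using False by simp
qed

lemma sum_before_below_block:
  assumes "finite A" "\<forall>a\<in>A. 0 \<le> len a" "c \<in> below_block f A B"
  shows "sum_before A len f c + len c \<le> sum len (below_block f A B)"
proof -
  have "insert c {x\<in>A. f x < f c} \<subseteq> below_block f A B"
    using assms(3) by (auto simp: below_block_def dest: order.strict_trans)
  then have "(\<Sum>x\<in>insert c {x\<in>A. f x < f c}. len x) \<le> sum len (below_block f A B)"
    using assms(1,2) by (intro sum_mono2) (auto simp: below_block_def)
  then show ?thesis
    using assms(1) by (simp add: sum_before_def add.commute)
qed

lemma sum_before_above_block:
  assumes "finite A" "\<forall>a\<in>A. 0 \<le> len a" "B \<subseteq> A" "B \<noteq> {}" "contiguous_block f A B"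
    and "c \<in> A - B" "c \<notin> below_block f A B"
  shows "sum len (below_block f A B) + sum len B \<le> sum_before A len f c"
proof -
  have above: "\<forall>b\<in>B. f b < f c"
    using assms(5-7) by (auto simp: contiguous_block_def below_block_def)
  obtain b0 where "b0 \<in> B"
    using assms(4) by blast
  then have "below_block f A B \<union> B \<subseteq> {x\<in>A. f x < f c}"
    using above assms(3) by (auto simp: below_block_def intro: order.strict_trans)
  moreover have "finite B"
    using assms(1,3) finite_subset by auto
  ultimately show ?thesis
    using assms(1,2) unfolding sum_before_def
    by (subst sum.union_disjoint[symmetric]) (auto simp: below_block_def intro!: sum_mono2)
qed

lemma UN_stacked_interval_block:
  fixes s :: real
  assumes "finite A" "\<forall>a\<in>A. 0 \<le> len a" "inj_on f A" "B \<subseteq> A" "contiguous_block f A B"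
  defines "s' \<equiv> s + sum len (below_block f A B)"
  shows "(\<Union>b\<in>B. stacked_interval s A len f b) = {s'..<s' + sum len B}"
proof -
  have "stacked_interval s A len f b = stacked_interval s' B len f b" if "b \<in> B" for b
    using sum_before_in_block[OF assms(1,4,5) that]
    by (simp add: stacked_interval_def s'_def add.assoc)
  then have "(\<Union>b\<in>B. stacked_interval s A len f b) = (\<Union>b\<in>B. stacked_interval s' B len f b)"
    by simp
  also have "\<dots> = {s'..<s' + sum len B}"
    using assms(1-4) by (intro UN_stacked_interval) (auto intro: finite_subset inj_on_subset)
  finally show ?thesis .
qed

text \<open>A letter outside B stacked strictly between two letters of B would have its interval
  inside the union, hence overlapping the interval of a letter of B.\<close>
lemma contiguous_block_if_UN_stacked_interval:
  assumes "finite A" "\<forall>a\<in>A. 0 < len a" "inj_on f A" "B \<subseteq> A"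
    and "(\<Union>b\<in>B. stacked_interval s A len f b) = {u..<v}"
  shows "contiguous_block f A B"
  unfolding contiguous_block_def
proof (rule ballI, rule ccontr)
  fix c assume c: "c \<in> A - B" and "\<not> ((\<forall>b\<in>B. f c < f b) \<or> (\<forall>b\<in>B. f b < f c))"
  then obtain b1 b2 where b: "b1 \<in> B" "b2 \<in> B" "\<not> f c < f b1" "\<not> f b2 < f c"
    by blast
  then have "f b1 \<noteq> f c" "f c \<noteq> f b2"
    using c assms(3,4) by (auto dest: inj_onD)
  then have order: "f b1 < f c" "f c < f b2"
    using b by auto
  have nonneg: "\<forall>a\<in>A. 0 \<le> len a"
    using assms(2) by (simp add: less_imp_le)
  have start: "s + sum_before A len f a \<in> stacked_interval s A len f a" if "a \<in> A" for a
    using assms(2) that by (simp add: stacked_interval_def)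
  define z where "z = s + sum_before A len f c"
  have "z \<in> stacked_interval s A len f c"
    using start c by (simp add: z_def)
  moreover have "z \<in> {u..<v}"
  proof -
    have "s + sum_before A len f b \<in> {u..<v}" if "b \<in> B" for b
      using start[of b] that assms(4,5) by blast
    moreover have "sum_before A len f b1 + len b1 \<le> sum_before A len f c"
      "sum_before A len f c + len c \<le> sum_before A len f b2"
      using order b(1) c assms(4) by (auto intro!: sum_before_add_le[OF assms(1) nonneg])
    ultimately show ?thesis
      using assms(2,4) b c by (force simp: z_def)
  qed
  then obtain b where "b \<in> B" "z \<in> stacked_interval s A len f b"
    using assms(5) by blast
  ultimately show False
    using stacked_interval_disjoint[OF assms(1) nonneg assms(3), of c b s] c assms(4) by auto
qed

section \<open>Restricting a permutation\<close>

definition rank_in :: "('a \<Rightarrow> 'b::linorder) \<Rightarrow> 'a set \<Rightarrow> 'a \<Rightarrow> nat" where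
  "rank_in f C c = card {x\<in>C. f x < f c}"

lemma rank_in_less_iff:
  assumes "finite C" "c \<in> C" "c' \<in> C"
  shows "rank_in f C c < rank_in f C c' \<longleftrightarrow> f c < f c'"
proof
  assume "f c < f c'"
  then have "{x\<in>C. f x < f c} \<subset> {x\<in>C. f x < f c'}"
    using assms(2) by (auto dest: order.strict_trans)
  then show "rank_in f C c < rank_in f C c'"
    using assms(1) by (simp add: rank_in_def psubset_card_mono)
next
  assume "rank_in f C c < rank_in f C c'"
  moreover have "rank_in f C c' \<le> rank_in f C c" if "\<not> f c < f c'"
    unfolding rank_in_def using assms(1) that by (intro card_mono) auto
  ultimately show "f c < f c'"
    by linarith
qed

lemma bij_betw_rank_in:
  assumes "finite C" "inj_on f C"
  shows "bij_betw (rank_in f C) C {..<card C}"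
proof -
  have inj: "inj_on (rank_in f C) C"
  proof (rule inj_onI)
    fix c c' assume "c \<in> C" "c' \<in> C" "rank_in f C c = rank_in f C c'"
    then have "f c = f c'"
      using rank_in_less_iff[OF assms(1), of c c' f] rank_in_less_iff[OF assms(1), of c' c f]
      by (metis less_irrefl linorder_neqE)
    then show "c = c'"
      using assms(2) \<open>c \<in> C\<close> \<open>c' \<in> C\<close> by (simp add: inj_on_eq_iff)
  qed
  moreover have "rank_in f C ` C \<subseteq> {..<card C}"
    using assms(1) by (auto simp: rank_in_def intro!: psubset_card_mono)
  ultimately have "rank_in f C ` C = {..<card C}"
    by (intro card_subset_eq) (auto simp: card_image)
  then show ?thesis
    using inj by (simp add: bij_betw_def)
qed

lemma rank_in_bij_betw_eq:
  fixes C :: "'a::linorder set" and g :: "'a \<Rightarrow> 'b::linorder"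
  assumes "finite C" "bij_betw \<tau> C C" "\<forall>b\<in>C. \<forall>b'\<in>C. \<tau> b < \<tau> b' \<longleftrightarrow> g b < g b'" "c \<in> C"
  shows "rank_in (\<lambda>x. x) C (\<tau> c) = rank_in g C c"
proof -
  have "{x\<in>C. x < \<tau> c} = \<tau> ` {x\<in>C. \<tau> x < \<tau> c}"
    using assms(2) by (auto simp: bij_betw_def)
  also have "card \<dots> = card {x\<in>C. \<tau> x < \<tau> c}"
    using assms(2) by (intro card_image) (auto simp: bij_betw_def intro: inj_on_subset)
  also have "{x\<in>C. \<tau> x < \<tau> c} = {x\<in>C. g x < g c}"
    using assms(3,4) by auto
  finally show ?thesis
    by (simp add: rank_in_def)
qed

text \<open>Existence: compose the rank of g with the inverse of the rank in C. Uniqueness: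
  the rank of inv \<sigma> b in C is the g-rank of b, and ranks are injective.\<close>
lemma ex1_permutes_order_pattern:
  fixes C :: "'a::linorder set" and g :: "'a \<Rightarrow> 'b::linorder"
  assumes "finite C" "inj_on g C"
  shows "\<exists>!\<sigma>. \<sigma> permutes C \<and> (\<forall>b\<in>C. \<forall>b'\<in>C. inv \<sigma> b < inv \<sigma> b' \<longleftrightarrow> g b < g b')"
proof (rule ex_ex1I)
  have rank_id: "bij_betw (rank_in (\<lambda>x. x) C) C {..<card C}"
    using assms(1) by (simp add: bij_betw_rank_in)
  define \<tau> where "\<tau> x = (if x \<in> C then inv_into C (rank_in (\<lambda>x. x) C) (rank_in g C x) else x)" for x
  have "bij_betw \<tau> C C"
    using bij_betw_trans[OF bij_betw_rank_in[OF assms] bij_betw_inv_into[OF rank_id]]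
    by (rule bij_betw_cong[THEN iffD1, rotated]) (simp add: \<tau>_def)
  then have \<tau>: "\<tau> permutes C"
    by (rule bij_imp_permutes) (simp add: \<tau>_def)
  have "rank_in (\<lambda>x. x) C (\<tau> b) = rank_in g C b" if "b \<in> C" for b
    using that rank_id bij_betw_rank_in[OF assms]
    by (auto simp: \<tau>_def bij_betw_def intro!: f_inv_into_f)
  then have "\<tau> b < \<tau> b' \<longleftrightarrow> g b < g b'" if "b \<in> C" "b' \<in> C" for b b'
    using that rank_in_less_iff[OF assms(1)] permutes_in_image[OF \<tau>] by metis
  then show "\<exists>\<sigma>. \<sigma> permutes C \<and> (\<forall>b\<in>C. \<forall>b'\<in>C. inv \<sigma> b < inv \<sigma> b' \<longleftrightarrow> g b < g b')"
    using \<tau> by (intro exI[of _ "inv \<tau>"]) (simp add: permutes_inv permutes_inv_inv)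
next
  fix \<sigma> \<sigma>'
  assume "\<sigma> permutes C \<and> (\<forall>b\<in>C. \<forall>b'\<in>C. inv \<sigma> b < inv \<sigma> b' \<longleftrightarrow> g b < g b')"
    and "\<sigma>' permutes C \<and> (\<forall>b\<in>C. \<forall>b'\<in>C. inv \<sigma>' b < inv \<sigma>' b' \<longleftrightarrow> g b < g b')"
  then have \<sigma>: "\<sigma> permutes C" "inv \<sigma> permutes C" "\<forall>b\<in>C. \<forall>b'\<in>C. inv \<sigma> b < inv \<sigma> b' \<longleftrightarrow> g b < g b'"
    and \<sigma>': "\<sigma>' permutes C" "inv \<sigma>' permutes C" "\<forall>b\<in>C. \<forall>b'\<in>C. inv \<sigma>' b < inv \<sigma>' b' \<longleftrightarrow> g b < g b'"
    by (auto simp: permutes_inv)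
  have "inv \<sigma> b = inv \<sigma>' b" for b
  proof (cases "b \<in> C")
    case True
    have "rank_in (\<lambda>x. x) C (inv \<sigma> b) = rank_in (\<lambda>x. x) C (inv \<sigma>' b)"
      using rank_in_bij_betw_eq[OF assms(1) permutes_imp_bij[OF \<sigma>(2)] \<sigma>(3) True]
        rank_in_bij_betw_eq[OF assms(1) permutes_imp_bij[OF \<sigma>'(2)] \<sigma>'(3) True] by simp
    moreover have "inv \<sigma> b \<in> C" "inv \<sigma>' b \<in> C"
      using True \<sigma>(2) \<sigma>'(2) by (simp_all add: permutes_in_image)
    ultimately show ?thesis
      using bij_betw_rank_in[OF assms(1), of "\<lambda>x. x"] by (auto simp: bij_betw_def inj_on_eq_iff)
  next
    case False
    then show ?thesis
      using \<sigma>(2) \<sigma>'(2) by (simp add: permutes_not_in)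
  qed
  then have "inv \<sigma> = inv \<sigma>'" ..
  then show "\<sigma> = \<sigma>'"
    using permutes_inv_inv[OF \<sigma>(1)] permutes_inv_inv[OF \<sigma>'(1)] by metis
qed

lemma perm_restrict_order_pattern:
  assumes "finite C" "inj_on (inv p) C"
  shows "perm_restrict p C permutes C"
    and "\<forall>b\<in>C. \<forall>b'\<in>C. inv (perm_restrict p C) b < inv (perm_restrict p C) b' \<longleftrightarrow> inv p b < inv p b'"
  using theI'[OF ex1_permutes_order_pattern[OF assms]] by (simp_all add: perm_restrict_def)

lemma iet_transl_perm_restrict:
  assumes "finite C" "inj_on (inv p) C" "c \<in> C"
  shows "iet_transl C len (perm_restrict p C) c
    = sum_before C len (inv p) c - sum_before C len (\<lambda>x. x) c"
proof -
  have "{x\<in>C. inv (perm_restrict p C) x < inv (perm_restrict p C) c} = {x\<in>C. inv p x < inv p c}"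
    using perm_restrict_order_pattern(2)[OF assms(1,2)] assms(3) by auto
  then show ?thesis
    by (simp add: iet_transl_def sum_before_def)
qed

section \<open>Invariant contiguous sub-alphabets\<close>

lemma iet_map_eq:
  assumes "finite A" "\<forall>a\<in>A. 0 \<le> len a" "a \<in> A" "x \<in> iet_interval l A len a"
  shows "iet_map l A len p x = x + iet_transl A len p a"
proof -
  have "a' = a" if "a' \<in> A" "x \<in> iet_interval l A len a'" for a'
    using stacked_interval_disjoint[OF assms(1,2), of "\<lambda>x. x" a' a l] assms(3,4) that
    by (auto simp: iet_interval_eq_stacked_interval)
  then have "(THE a. a \<in> A \<and> x \<in> iet_interval l A len a) = a"
    using assms(3,4) by blast
  then show ?thesis
    using assms(3,4) by (auto simp: iet_map_def)
qed

lemma iet_map_image_iet_interval: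
  assumes "finite A" "\<forall>a\<in>A. 0 \<le> len a" "a \<in> A"
  shows "iet_map l A len p ` iet_interval l A len a = stacked_interval l A len (inv p) a"
proof -
  have "iet_map l A len p ` iet_interval l A len a
      = (\<lambda>x. x + iet_transl A len p a) ` iet_interval l A len a"
    using iet_map_eq[OF assms] by (intro image_cong) auto
  then show ?thesis
    by (simp add: iet_interval_eq_stacked_interval stacked_interval_def iet_transl_eq_sum_before
        image_add_atLeastLessThan' ac_simps)
qed

lemma glue_inv_glue:
  assumes "x \<notin> {sub_gamma l A len B ..< sub_gamma l A len B + sum len B}"
  shows "glue_inv l A len B (glue l A len B x) = x"
  using assms by (auto simp: glue_def glue_inv_def)

locale invariant_block =
  fixes l :: real and A B :: "'a::linorder set" and len :: "'a \<Rightarrow> real" and p :: "'a \<Rightarrow> 'a"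
  assumes finite_A: "finite A"
    and len_pos: "\<forall>a\<in>A. 0 < len a"
    and perm: "p permutes A"
    and B_subset: "B \<subseteq> A"
    and B_nonempty: "B \<noteq> {}"
    and B_contiguous: "\<forall>a\<in>A. \<forall>b1\<in>B. \<forall>b2\<in>B. b1 \<le> a \<and> a \<le> b2 \<longrightarrow> a \<in> B"
    and B_invariant: "iet_map l A len p ` iet_union l A len B = iet_union l A len B"
begin

lemma len_nonneg: "\<forall>a\<in>A. 0 \<le> len a"
  using len_pos by (simp add: less_imp_le)

lemma finite_B: "finite B"
  using finite_A B_subset by (rule finite_subset[rotated])

lemma sum_len_B_pos: "0 < sum len B"
  using finite_B B_nonempty B_subset len_pos by (intro sum_pos) auto

lemma inj_on_inv_p: "inj_on (inv p) A"
  using permutes_inj[OF permutes_inv[OF perm]] by (rule inj_on_subset) simp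

lemma contiguous_block_id: "contiguous_block (\<lambda>x. x) A B"
  using B_contiguous by (force simp: contiguous_block_def not_less)

lemma sub_gamma_eq: "sub_gamma l A len B = l + sum len (below_block (\<lambda>x. x) A B)"
proof -
  have "sum_before B len (\<lambda>x. x) (Min B) = 0"
    unfolding sum_before_def by (intro sum.neutral) (auto dest: Min_le[OF finite_B])
  then show ?thesis
    using sum_before_in_block[OF finite_A B_subset contiguous_block_id Min_in[OF finite_B B_nonempty]]
    by (simp add: sub_gamma_def iet_left_eq_sum_before)
qed

lemma iet_union_eq:
  "iet_union l A len B = {sub_gamma l A len B ..< sub_gamma l A len B + sum len B}"
  using UN_stacked_interval_block[OF finite_A len_nonneg _ B_subset contiguous_block_id, of l]
  by (simp add: iet_union_def iet_interval_eq_stacked_interval sub_gamma_eq)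

lemma UN_image_iet_interval_block:
  "(\<Union>b\<in>B. stacked_interval l A len (inv p) b)
    = {sub_gamma l A len B ..< sub_gamma l A len B + sum len B}"
proof -
  have "(\<Union>b\<in>B. stacked_interval l A len (inv p) b) = iet_map l A len p ` iet_union l A len B"
    unfolding iet_union_def image_UN
    using B_subset
    by (intro SUP_cong refl iet_map_image_iet_interval[OF finite_A len_nonneg, symmetric]) auto
  then show ?thesis
    using B_invariant by (simp only: iet_union_eq)
qed

lemma contiguous_block_inv: "contiguous_block (inv p) A B"
  using contiguous_block_if_UN_stacked_interval[OF finite_A len_pos inj_on_inv_p B_subset
      UN_image_iet_interval_block] .

lemma sum_below_block_inv:
  "sum len (below_block (inv p) A B) = sum len (below_block (\<lambda>x. x) A B)"
proof -
  have "{l + sum len (below_block (inv p) A B) ..< l + sum len (below_block (inv p) A B) + sum len B}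
      = {sub_gamma l A len B ..< sub_gamma l A len B + sum len B}"
    using UN_stacked_interval_block[OF finite_A len_nonneg inj_on_inv_p B_subset
        contiguous_block_inv, of l]
    by (simp only: UN_image_iet_interval_block)
  then have "{l + sum len (below_block (inv p) A B) ..< l + sum len (below_block (inv p) A B) + sum len B}
      = {l + sum len (below_block (\<lambda>x. x) A B) ..< l + sum len (below_block (\<lambda>x. x) A B) + sum len B}"
    by (simp add: sub_gamma_eq)
  from atLeastLessThan_inj(1)[OF this] show ?thesis
    using sum_len_B_pos by simp
qed

lemma iet_interval_block:
  assumes "b \<in> B"
  shows "iet_interval (sub_gamma l A len B) B len b = iet_interval l A len b"
  using sum_before_in_block[OF finite_A B_subset contiguous_block_id assms, of len]
  by (simp add: iet_interval_def iet_left_eq_sum_before sub_gamma_eq add.assoc)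

lemma iet_transl_block:
  assumes "b \<in> B"
  shows "iet_transl A len p b = iet_transl B len (perm_restrict p B) b"
  using sum_before_in_block[OF finite_A B_subset contiguous_block_id assms, of len]
    sum_before_in_block[OF finite_A B_subset contiguous_block_inv assms, of len]
    iet_transl_perm_restrict[OF finite_B inj_on_subset[OF inj_on_inv_p B_subset] assms]
  by (simp add: iet_transl_eq_sum_before sum_below_block_inv)

lemma S_sub_eq:
  assumes "x \<in> iet_union l A len B"
  shows "S_sub l A len p B x = iet_map (sub_gamma l A len B) B len (perm_restrict p B) x"
proof -
  obtain b where b: "b \<in> B" "x \<in> iet_interval l A len b"
    using assms by (auto simp: iet_union_def)
  then have "S_sub l A len p B x = x + iet_transl A len p b"
    using iet_map_eq[OF finite_A len_nonneg] B_subset by (auto simp: S_sub_def)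
  also have "\<dots> = iet_map (sub_gamma l A len B) B len (perm_restrict p B) x"
  proof -
    have "\<forall>a\<in>B. 0 \<le> len a" "x \<in> iet_interval (sub_gamma l A len B) B len b"
      using len_nonneg B_subset b iet_interval_block[OF b(1)] by auto
    then show ?thesis
      using iet_map_eq[OF finite_B _ b(1)] by (simp add: iet_transl_block[OF b(1)])
  qed
  finally show ?thesis .
qed

lemma stacked_interval_outside_block:
  assumes "contiguous_block f A B" "l + sum len (below_block f A B) = sub_gamma l A len B"
    and "c \<in> A - B" "x \<in> stacked_interval l A len f c"
  shows "if c \<in> below_block f A B then x < sub_gamma l A len B
    else sub_gamma l A len B + sum len B \<le> x"
  using sum_before_below_block[OF finite_A len_nonneg, of c f B]
    sum_before_above_block[OF finite_A len_nonneg B_subset B_nonempty assms(1,3)] assms(2,4)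
  by (auto simp: stacked_interval_def)

text \<open>Stated for both orders at once: f = id gives the intervals I_c, f = inv p their images.\<close>
lemma glue_stacked_interval:
  assumes "contiguous_block f A B" "l + sum len (below_block f A B) = sub_gamma l A len B"
    and "c \<in> A - B" "x \<in> stacked_interval l A len f c"
  shows "glue l A len B x
    = x + ((compl_start l A len B + sum_before (A - B) len f c) - (l + sum_before A len f c))"
proof (cases "c \<in> below_block f A B")
  case True
  then have "x < sub_gamma l A len B"
    using stacked_interval_outside_block[OF assms] by simp
  moreover have "l < sub_gamma l A len B"
  proof -
    have "0 < len c"
      using len_pos assms(3) by simp
    then show ?thesis
      using sum_before_below_block[OF finite_A len_nonneg True]
        sum_before_nonneg[OF len_nonneg, of f c] assms(2) by linarith
  qed
  ultimately show ?thesis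
    using True sum_before_outside_block[OF finite_A B_subset assms(1,3)]
    by (simp add: glue_def compl_start_def)
next
  case False
  then have "sub_gamma l A len B + sum len B \<le> x"
    using stacked_interval_outside_block[OF assms] by simp
  then show ?thesis
    using False sum_before_outside_block[OF finite_A B_subset assms(1,3)] sum_len_B_pos
    by (auto simp: glue_def compl_start_def sub_delta_def)
qed

lemma glue_image_iet_interval:
  assumes "c \<in> A - B"
  shows "glue l A len B ` iet_interval l A len c = iet_interval (compl_start l A len B) (A - B) len c"
proof -
  have "glue l A len B ` iet_interval l A len c
      = (\<lambda>x. x + ((compl_start l A len B + sum_before (A - B) len (\<lambda>x. x) c)
                     - (l + sum_before A len (\<lambda>x. x) c))) ` iet_interval l A len c"
    using glue_stacked_interval[OF contiguous_block_id sub_gamma_eq[symmetric] assms]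
    by (intro image_cong) (simp_all add: iet_interval_eq_stacked_interval)
  then show ?thesis
    by (simp add: iet_interval_eq_stacked_interval stacked_interval_def image_add_atLeastLessThan'
        ac_simps)
qed

lemma S_compl_eq:
  assumes "y \<in> {compl_start l A len B ..< compl_start l A len B + sum len (A - B)}"
  shows "S_compl l A len p B y
    = iet_map (compl_start l A len B) (A - B) len (perm_restrict p (A - B)) y"
proof -
  have finite_C: "finite (A - B)" and nonneg_C: "\<forall>a\<in>A - B. 0 \<le> len a"
    using finite_A len_nonneg by auto
  obtain c where c: "c \<in> A - B" "y \<in> iet_interval (compl_start l A len B) (A - B) len c"
    using assms UN_stacked_interval[OF finite_C nonneg_C inj_on_id2]
    unfolding iet_interval_eq_stacked_interval by blast
  then obtain x where x: "x \<in> iet_interval l A len c" "y = glue l A len B x"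
    using glue_image_iet_interval by (metis imageE)
  have x_stacked: "x \<in> stacked_interval l A len (\<lambda>x. x) c"
    using x(1) by (simp add: iet_interval_eq_stacked_interval)
  have "glue_inv l A len B y = x"
    using x(2) glue_inv_glue stacked_interval_outside_block[OF contiguous_block_id
        sub_gamma_eq[symmetric] c(1) x_stacked]
    by (metis atLeastLessThan_iff not_le)
  then have "S_compl l A len p B y = glue l A len B (iet_map l A len p x)"
    by (simp add: S_compl_def)
  also have "\<dots> = iet_map l A len p x + ((compl_start l A len B + sum_before (A - B) len (inv p) c)
                    - (l + sum_before A len (inv p) c))"
    using c(1) x(1) iet_map_image_iet_interval[OF finite_A len_nonneg, of c l p]
    by (intro glue_stacked_interval[OF contiguous_block_inv]) (auto simp: sum_below_block_inv sub_gamma_eq)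
  also have "\<dots> = y + iet_transl (A - B) len (perm_restrict p (A - B)) c"
    using iet_map_eq[OF finite_A len_nonneg _ x(1)] c(1) x(2)
      glue_stacked_interval[OF contiguous_block_id sub_gamma_eq[symmetric] c(1) x_stacked]
      iet_transl_perm_restrict[OF finite_C inj_on_subset[OF inj_on_inv_p] c(1)]
    by (simp add: iet_transl_eq_sum_before)
  also have "\<dots> = iet_map (compl_start l A len B) (A - B) len (perm_restrict p (A - B)) y"
    using iet_map_eq[OF finite_C nonneg_C c] by simp
  finally show ?thesis .
qed

end

theorem lemma4p9:
  fixes A B :: "'a::linorder set" and len :: "'a \<Rightarrow> real" and p :: "'a \<Rightarrow> 'a" and l :: real
  assumes finA: "finite A"
    and pos: "\<forall>a\<in>A. len a > 0"
    and perm: "p permutes A"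
    and sub: "B \<subseteq> A" and nonempty: "B \<noteq> {}" and proper: "B \<noteq> A"
    and contiguous: "\<forall>a\<in>A. \<forall>b1\<in>B. \<forall>b2\<in>B. b1 \<le> a \<and> a \<le> b2 \<longrightarrow> a \<in> B"
    and invariant: "iet_map l A len p ` iet_union l A len B = iet_union l A len B"
  shows "(\<forall>b\<in>B. iet_interval (sub_gamma l A len B) B len b = iet_interval l A len b)
       \<and> (\<forall>x\<in>iet_union l A len B.
            S_sub l A len p B x = iet_map (sub_gamma l A len B) B len (perm_restrict p B) x)
       \<and> (\<forall>b\<in>A - B. glue l A len B ` iet_interval l A len b
                      = iet_interval (compl_start l A len B) (A - B) len b)
       \<and> (\<forall>y\<in>{compl_start l A len B ..< compl_start l A len B + (\<Sum>b\<in>A - B. len b)}.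
            S_compl l A len p B y
              = iet_map (compl_start l A len B) (A - B) len (perm_restrict p (A - B)) y)"
proof -
  interpret invariant_block l A B len p
    using finA pos perm sub nonempty contiguous invariant by unfold_locales
  show ?thesis
    using iet_interval_block S_sub_eq glue_image_iet_interval S_compl_eq by blast
qed

end
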